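(* Let $p$ be a propositional variable. The formula $\neg\neg\Box p\to\Box\neg\neg p$ is derivable in $\mathsf{CK}\oplus\mathsf{N}_\Diamond\oplus\mathsf{I}_{\Diamond\Box}$ but not in $\mathsf{CK}\oplus\mathsf{N}_{\Diamond\Box}\oplus\mathsf{C}_\Diamond\oplus\mathsf{I}_{\Diamond\Box}$ (and hence not in $\mathsf{CK}\oplus\mathsf{N}_{\Diamond\Box}\oplus\mathsf{I}_{\Diamond\Box}$).
   Context: Formulas: $\mathbf{L}$ is generated from a countably infinite set of propositional variables by $\varphi ::= p \mid \bot \mid \varphi\wedge\varphi \mid \varphi\vee\varphi \mid \varphi\to\varphi \mid \Box\varphi \mid \Diamond\varphi$; $\neg\varphi:=\varphi\to\bot$. Axioms: $\mathsf{K}_\Box$: $\Box(\varphi\to\psi)\to(\Box\varphi\to\Box\psi)$; $\mathsf{K}_\Diamond$: $\Box(\varphi\to\psi)\to(\Diamond\varphi\to\Diamond\psi)$; $\mathsf{N}_\Diamond$: $\Diamond\bot\to\bot$; $\mathsf{N}_{\Diamond\Box}$: $\Diamond\bot\to\Box\bot$; $\mathsf{C}_\Diamond$: $\Diamond(\varphi\vee\psi)\to\Diamond\varphi\vee\Diamond\psi$; $\mathsf{I}_{\Diamond\Box}$: $(\Diamond\varphi\to\Box\psi)\to\Box(\varphi\to\psi)$. For a set $\mathsf{Ax}$ of axioms, $\mathsf{CK}\oplus\mathsf{Ax}$ is the relation $\Gamma\vdash_{\mathsf{Ax}}\varphi$ inductively generated by: (Ax) $\Gamma\vdash\varphi$ whenever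 $\varphi$ is a substitution instance of an axiom of a standard Hilbert axiomatisation of intuitionistic propositional logic, of $\mathsf{K}_\Box$, of $\mathsf{K}_\Diamond$, or of an element of $\mathsf{Ax}$; (El) $\Gamma\vdash\varphi$ if $\varphi\in\Gamma$; (MP) from $\Gamma\vdash\varphi$ and $\Gamma\vdash\varphi\to\psi$ infer $\Gamma\vdash\psi$; (Nec) from $\emptyset\vdash\varphi$ infer $\Gamma\vdash\Box\varphi$. A formula is derivable in a logic if $\emptyset\vdash_{\mathsf{Ax}}\varphi$. *)

theory Defs
  imports Main
begin

datatype fm = Var nat | Bot | And fm fm | Or fm fm | Imp fm fm | Box fm | Dia fm

definition Neg :: "fm \<Rightarrow> fm" where "Neg \<phi> = Imp \<phi> Bot"

primrec subst :: "(nat \<Rightarrow> fm) \<Rightarrow> fm \<Rightarrow> fm" where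
  "subst \<sigma> (Var n) = \<sigma> n"
| "subst \<sigma> Bot = Bot"
| "subst \<sigma> (And a b) = And (subst \<sigma> a) (subst \<sigma> b)"
| "subst \<sigma> (Or a b) = Or (subst \<sigma> a) (subst \<sigma> b)"
| "subst \<sigma> (Imp a b) = Imp (subst \<sigma> a) (subst \<sigma> b)"
| "subst \<sigma> (Box a) = Box (subst \<sigma> a)"
| "subst \<sigma> (Dia a) = Dia (subst \<sigma> a)"

definition instances :: "fm set \<Rightarrow> fm set" where
  "instances A = {subst \<sigma> a | \<sigma> a. a \<in> A}"

abbreviation "pA \<equiv> Var 0"
abbreviation "pB \<equiv> Var 1"
abbreviation "pC \<equiv> Var 2"

definition IPC_axioms :: "fm set" where
  "IPC_axioms = {
     Imp pA (Imp pB pA),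
     Imp (Imp pA (Imp pB pC)) (Imp (Imp pA pB) (Imp pA pC)),
     Imp (And pA pB) pA,
     Imp (And pA pB) pB,
     Imp pA (Imp pB (And pA pB)),
     Imp pA (Or pA pB),
     Imp pB (Or pA pB),
     Imp (Imp pA pC) (Imp (Imp pB pC) (Imp (Or pA pB) pC)),
     Imp Bot pA }"

definition K_Box :: fm where "K_Box = Imp (Box (Imp pA pB)) (Imp (Box pA) (Box pB))"
definition K_Dia :: fm where "K_Dia = Imp (Box (Imp pA pB)) (Imp (Dia pA) (Dia pB))"
definition N_Dia :: fm where "N_Dia = Imp (Dia Bot) Bot"
definition N_DiaBox :: fm where "N_DiaBox = Imp (Dia Bot) (Box Bot)"
definition C_Dia :: fm where "C_Dia = Imp (Dia (Or pA pB)) (Or (Dia pA) (Dia pB))"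
definition I_DiaBox :: fm where "I_DiaBox = Imp (Imp (Dia pA) (Box pB)) (Box (Imp pA pB))"

text \<open>The consequence relation of CK \<oplus> Ax: deriv Ax Gamma phi.\<close>
inductive deriv :: "fm set \<Rightarrow> fm set \<Rightarrow> fm \<Rightarrow> bool" for Ax :: "fm set" where
  ax: "\<phi> \<in> instances (IPC_axioms \<union> {K_Box, K_Dia} \<union> Ax) \<Longrightarrow> deriv Ax \<Gamma> \<phi>"
| el: "\<phi> \<in> \<Gamma> \<Longrightarrow> deriv Ax \<Gamma> \<phi>"
| mp: "deriv Ax \<Gamma> \<phi> \<Longrightarrow> deriv Ax \<Gamma> (Imp \<phi> \<psi>) \<Longrightarrow> deriv Ax \<Gamma> \<psi>"
| nec: "deriv Ax {} \<phi> \<Longrightarrow> deriv Ax \<Gamma> (Box \<phi>)"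

definition derivable :: "fm set \<Rightarrow> fm \<Rightarrow> bool" where
  "derivable Ax \<phi> = deriv Ax {} \<phi>"

end

theory Submission
  imports Defs
begin

text \<open>
  Positive part: assuming \<open>\<Diamond>\<not>p\<close>, the axioms \<open>K\<^sub>\<Box>\<close>, \<open>K\<^sub>\<Diamond>\<close> and \<open>N\<^sub>\<Diamond>\<close> refute \<open>\<Box>p\<close>, so
  \<open>\<not>\<not>\<Box>p\<close> makes \<open>\<Diamond>\<not>p\<close> absurd; hence \<open>\<Diamond>\<not>p \<rightarrow> \<Box>\<bottom>\<close>, and \<open>I\<^sub>\<Diamond>\<^sub>\<Box>\<close> turns this into
  \<open>\<Box>(\<not>p \<rightarrow> \<bottom>)\<close>, i.e. \<open>\<Box>\<not>\<not>p\<close>.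

  Negative part: a five-element Heyting algebra with modal operators validates every
  axiom of \<open>CK \<oplus> N\<^sub>\<Diamond>\<^sub>\<Box> \<oplus> C\<^sub>\<Diamond> \<oplus> I\<^sub>\<Diamond>\<^sub>\<Box>\<close> but refutes the formula. Dropping \<open>C\<^sub>\<Diamond>\<close> only
  shrinks the set of theorems.
\<close>

lemma deriv_mono_axioms:
  assumes "deriv Ax \<Gamma> \<phi>" and "Ax \<subseteq> Ax'"
  shows "deriv Ax' \<Gamma> \<phi>"
  using assms
proof (induction rule: deriv.induct)
  case (ax \<phi> \<Gamma>)
  then have "instances (IPC_axioms \<union> {K_Box, K_Dia} \<union> Ax)
      \<subseteq> instances (IPC_axioms \<union> {K_Box, K_Dia} \<union> Ax')"
    by (auto simp: instances_def)
  with ax show ?case by (blast intro: deriv.ax)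
qed (auto intro: deriv.intros)

lemma deriv_axiom_instance:
  "a \<in> IPC_axioms \<union> {K_Box, K_Dia} \<union> Ax \<Longrightarrow> deriv Ax \<Gamma> (subst \<sigma> a)"
  by (rule deriv.ax) (auto simp: instances_def)

lemma deriv_imp_K: "deriv Ax \<Gamma> (Imp a (Imp b a))"
  using deriv_axiom_instance[of "Imp pA (Imp pB pA)" Ax \<Gamma> "(!) [a, b]"]
  by (simp add: IPC_axioms_def)

lemma deriv_imp_S: "deriv Ax \<Gamma> (Imp (Imp a (Imp b c)) (Imp (Imp a b) (Imp a c)))"
  using deriv_axiom_instance[of "Imp (Imp pA (Imp pB pC)) (Imp (Imp pA pB) (Imp pA pC))"
      Ax \<Gamma> "(!) [a, b, c]"]
  by (simp add: IPC_axioms_def)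

lemma deriv_ex_falso: "deriv Ax \<Gamma> (Imp Bot a)"
  using deriv_axiom_instance[of "Imp Bot pA" Ax \<Gamma> "(!) [a]"] by (simp add: IPC_axioms_def)

lemma deriv_Box_K: "deriv Ax \<Gamma> (Imp (Box (Imp a b)) (Imp (Box a) (Box b)))"
  using deriv_axiom_instance[of K_Box Ax \<Gamma> "(!) [a, b]"] by (simp add: K_Box_def)

lemma deriv_Dia_K: "deriv Ax \<Gamma> (Imp (Box (Imp a b)) (Imp (Dia a) (Dia b)))"
  using deriv_axiom_instance[of K_Dia Ax \<Gamma> "(!) [a, b]"] by (simp add: K_Dia_def)

lemma deriv_N_Dia: "N_Dia \<in> Ax \<Longrightarrow> deriv Ax \<Gamma> (Imp (Dia Bot) Bot)"
  using deriv_axiom_instance[of N_Dia Ax \<Gamma> Var] by (simp add: N_Dia_def)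

lemma deriv_I_DiaBox:
  "I_DiaBox \<in> Ax \<Longrightarrow> deriv Ax \<Gamma> (Imp (Imp (Dia a) (Box b)) (Box (Imp a b)))"
  using deriv_axiom_instance[of I_DiaBox Ax \<Gamma> "(!) [a, b]"] by (simp add: I_DiaBox_def)

lemma deriv_imp_refl: "deriv Ax \<Gamma> (Imp a a)"
  using deriv.mp[OF deriv_imp_K deriv.mp[OF deriv_imp_K deriv_imp_S[of _ _ a "Imp a a" a]]] .

lemma deriv_deduction:
  assumes "deriv Ax (insert \<phi> \<Gamma>) \<psi>"
  shows "deriv Ax \<Gamma> (Imp \<phi> \<psi>)"
proof -
  have "deriv Ax \<Gamma> (Imp \<phi> \<psi>)" if "deriv Ax \<Gamma>' \<psi>" "\<Gamma>' = insert \<phi> \<Gamma>" for \<Gamma>'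
    using that
  proof (induction rule: deriv.induct)
    case (el \<psi> \<Gamma>')
    show ?case
    proof (cases "\<psi> = \<phi>")
      case True
      then show ?thesis by (simp add: deriv_imp_refl)
    next
      case False
      with el have "deriv Ax \<Gamma> \<psi>" by (auto intro: deriv.el)
      then show ?thesis by (rule deriv.mp[OF _ deriv_imp_K])
    qed
  next
    case (mp \<Gamma>' a b)
    then show ?case by (blast intro: deriv.mp[OF _ deriv.mp[OF _ deriv_imp_S]])
  qed (blast intro: deriv.intros deriv.mp[OF _ deriv_imp_K])+
  with assms show ?thesis by blast
qed

lemma deriv_Dia_Neg_refutes_Box:
  assumes "N_Dia \<in> Ax" and "deriv Ax \<Gamma> (Box \<phi>)" and "deriv Ax \<Gamma> (Dia (Neg \<phi>))"
  shows "deriv Ax \<Gamma> Bot"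
proof -
  have "deriv Ax (insert (Neg \<phi>) {\<phi>}) Bot"
    by (rule deriv.mp[of _ _ \<phi>]) (auto intro: deriv.el simp: Neg_def)
  then have "deriv Ax {} (Imp \<phi> (Neg (Neg \<phi>)))"
    unfolding Neg_def[of "Neg \<phi>"] by (intro deriv_deduction)
  then have "deriv Ax \<Gamma> (Box (Neg (Neg \<phi>)))"
    using assms(2) by (blast intro: deriv.nec deriv.mp[OF _ deriv.mp[OF _ deriv_Box_K]])
  then have "deriv Ax \<Gamma> (Dia Bot)"
    using assms(3) deriv_Dia_K[of Ax \<Gamma> "Neg \<phi>" Bot] unfolding Neg_def
    by (blast intro: deriv.mp)
  then show ?thesis using deriv_N_Dia[OF assms(1)] by (rule deriv.mp)
qed

lemma deriv_NegNeg_Box_imp_Box_NegNeg: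
  assumes "{N_Dia, I_DiaBox} \<subseteq> Ax"
  shows "derivable Ax (Imp (Neg (Neg (Box \<phi>))) (Box (Neg (Neg \<phi>))))"
proof -
  let ?\<Delta> = "{Dia (Neg \<phi>), Neg (Neg (Box \<phi>))}"
  have "deriv Ax (insert (Box \<phi>) ?\<Delta>) Bot"
    using assms by (auto intro: deriv_Dia_Neg_refutes_Box deriv.el)
  then have "deriv Ax ?\<Delta> (Neg (Box \<phi>))"
    unfolding Neg_def by (rule deriv_deduction)
  moreover have "deriv Ax ?\<Delta> (Imp (Neg (Box \<phi>)) Bot)"
    by (rule deriv.el) (simp add: Neg_def)
  ultimately have "deriv Ax ?\<Delta> (Box Bot)"
    by (blast intro: deriv.mp deriv_ex_falso)
  then have "deriv Ax {Neg (Neg (Box \<phi>))} (Imp (Dia (Neg \<phi>)) (Box Bot))"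
    by (rule deriv_deduction)
  then have "deriv Ax {Neg (Neg (Box \<phi>))} (Box (Neg (Neg \<phi>)))"
    using assms deriv_I_DiaBox[of Ax _ "Neg \<phi>" Bot] unfolding Neg_def[of "Neg \<phi>"]
    by (blast intro: deriv.mp)
  then show ?thesis
    unfolding derivable_def by (rule deriv_deduction)
qed

text \<open>
  The Heyting algebra is the lattice \<open>0 < a, b < a \<squnion> b < 1\<close>; \<open>\<Box>\<close> sends \<open>1\<close> to \<open>1\<close> and
  everything else to \<open>a \<squnion> b\<close>, and \<open>\<Diamond>\<close> sends \<open>0\<close> to \<open>a \<squnion> b\<close> and everything else to \<open>1\<close>.
  Since \<open>\<Diamond>0 \<noteq> 0\<close>, the axiom \<open>N\<^sub>\<Diamond>\<close> fails, as it must. Sending every variable to \<open>0\<close>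
  gives \<open>\<not>\<not>\<Box>p = \<not>\<not>(a \<squnion> b) = 1\<close> but \<open>\<Box>\<not>\<not>p = \<Box>0 = a \<squnion> b\<close>.
\<close>
datatype alg = Zero | AtomA | AtomB | Coatom | One

fun alg_meet :: "alg \<Rightarrow> alg \<Rightarrow> alg" where
  "alg_meet Zero _ = Zero" | "alg_meet _ Zero = Zero"
| "alg_meet One y = y" | "alg_meet x One = x"
| "alg_meet Coatom y = y" | "alg_meet x Coatom = x"
| "alg_meet AtomA AtomA = AtomA" | "alg_meet AtomB AtomB = AtomB"
| "alg_meet _ _ = Zero"

fun alg_join :: "alg \<Rightarrow> alg \<Rightarrow> alg" where
  "alg_join Zero y = y" | "alg_join x Zero = x"
| "alg_join One _ = One" | "alg_join _ One = One"
| "alg_join Coatom _ = Coatom" | "alg_join _ Coatom = Coatom"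
| "alg_join AtomA AtomA = AtomA" | "alg_join AtomB AtomB = AtomB"
| "alg_join _ _ = Coatom"

fun alg_imp :: "alg \<Rightarrow> alg \<Rightarrow> alg" where
  "alg_imp Zero _ = One" | "alg_imp _ One = One" | "alg_imp One y = y"
| "alg_imp Coatom Coatom = One" | "alg_imp Coatom y = y"
| "alg_imp AtomA AtomA = One" | "alg_imp AtomA Coatom = One" | "alg_imp AtomA _ = AtomB"
| "alg_imp AtomB AtomB = One" | "alg_imp AtomB Coatom = One" | "alg_imp AtomB _ = AtomA"

fun alg_box :: "alg \<Rightarrow> alg" where
  "alg_box One = One" | "alg_box _ = Coatom"

fun alg_dia :: "alg \<Rightarrow> alg" where
  "alg_dia Zero = Coatom" | "alg_dia _ = One"

primrec alg_eval :: "(nat \<Rightarrow> alg) \<Rightarrow> fm \<Rightarrow> alg" where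
  "alg_eval v (Var n) = v n"
| "alg_eval v Bot = Zero"
| "alg_eval v (And a b) = alg_meet (alg_eval v a) (alg_eval v b)"
| "alg_eval v (Or a b) = alg_join (alg_eval v a) (alg_eval v b)"
| "alg_eval v (Imp a b) = alg_imp (alg_eval v a) (alg_eval v b)"
| "alg_eval v (Box a) = alg_box (alg_eval v a)"
| "alg_eval v (Dia a) = alg_dia (alg_eval v a)"

definition alg_valid :: "fm \<Rightarrow> bool" where
  "alg_valid a \<longleftrightarrow> (\<forall>v. alg_eval v a = One)"

lemma alg_eval_subst: "alg_eval v (subst \<sigma> a) = alg_eval (\<lambda>n. alg_eval v (\<sigma> n)) a"
  by (induction a) auto

lemma alg_valid_subst: "alg_valid a \<Longrightarrow> alg_valid (subst \<sigma> a)"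
  by (simp add: alg_valid_def alg_eval_subst)

lemma alg_imp_One_mp: "alg_imp x y = One \<Longrightarrow> x = One \<Longrightarrow> y = One"
  by (cases y) auto

lemma alg_sound:
  assumes "deriv Ax \<Gamma> \<phi>"
    and "\<forall>a \<in> IPC_axioms \<union> {K_Box, K_Dia} \<union> Ax. alg_valid a"
    and "\<forall>\<psi> \<in> \<Gamma>. alg_eval v \<psi> = One"
  shows "alg_eval v \<phi> = One"
  using assms
proof (induction arbitrary: v rule: deriv.induct)
  case (ax \<phi> \<Gamma>)
  then obtain \<sigma> a where "\<phi> = subst \<sigma> a" and "alg_valid a"
    by (auto simp: instances_def)
  then show ?case by (metis alg_valid_subst alg_valid_def)
next
  case (mp \<Gamma> \<phi> \<psi>)
  then show ?case by (auto intro: alg_imp_One_mp)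
qed auto

lemma alg_valid_axioms:
  "\<forall>a \<in> IPC_axioms \<union> {K_Box, K_Dia} \<union> {N_DiaBox, C_Dia, I_DiaBox}. alg_valid a"
  unfolding alg_valid_def
proof (intro ballI allI)
  fix a v
  assume "a \<in> IPC_axioms \<union> {K_Box, K_Dia} \<union> {N_DiaBox, C_Dia, I_DiaBox}"
  then show "alg_eval v a = One"
    unfolding IPC_axioms_def K_Box_def K_Dia_def N_DiaBox_def C_Dia_def I_DiaBox_def
    by (simp only: Un_iff insert_iff empty_iff, elim disjE; simp,
        (cases "v 0"; cases "v 1"; cases "v 2"; simp)?)
qed

theorem mainTheorem16:
  fixes p :: fm
  assumes "\<exists>n. p = Var n"
  shows "derivable {N_Dia, I_DiaBox} (Imp (Neg (Neg (Box p))) (Box (Neg (Neg p))))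
       \<and> \<not> derivable {N_DiaBox, C_Dia, I_DiaBox} (Imp (Neg (Neg (Box p))) (Box (Neg (Neg p))))
       \<and> \<not> derivable {N_DiaBox, I_DiaBox} (Imp (Neg (Neg (Box p))) (Box (Neg (Neg p))))"
proof -
  let ?\<phi> = "Imp (Neg (Neg (Box p))) (Box (Neg (Neg p)))"
  obtain n where "p = Var n" using assms by blast
  then have refuted: "alg_eval (\<lambda>_. Zero) ?\<phi> \<noteq> One"
    by (simp add: Neg_def)
  have not_derivable: "\<not> derivable {N_DiaBox, C_Dia, I_DiaBox} ?\<phi>"
    using alg_sound[OF _ alg_valid_axioms, of "{}" ?\<phi> "\<lambda>_. Zero"] refuted
    by (auto simp: derivable_def)
  moreover have "\<not> derivable {N_DiaBox, I_DiaBox} ?\<phi>"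
    using not_derivable deriv_mono_axioms[of "{N_DiaBox, I_DiaBox}" "{}" ?\<phi>]
    by (auto simp: derivable_def)
  ultimately show ?thesis
    using deriv_NegNeg_Box_imp_Box_NegNeg by simp
qed

end
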